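(* Let $G$ be a finite abstract simplicial complex. Then $\sum_{x\in G} \omega(x)\big(1-\chi(S(x))\big)=\chi(G)$.
   Context: A finite abstract simplicial complex $G$ is a finite set of non-empty finite sets closed under taking non-empty subsets. $\omega(x)=(-1)^{|x|-1}$ and $\chi(G)=\sum_{x\in G}\omega(x)$. The Barycentric refinement $G_1$ is the graph with vertex set $G$ where $x\neq y$ are adjacent iff $x\subset y$ or $y\subset x$. The unit sphere $S(x)$ is the set of simplices $y\in G$ with $y\subsetneq x$ or $x\subsetneq y$; $\chi(S(x))$ denotes the Euler characteristic of the Whitney (clique) complex of the subgraph of $G_1$ induced on $S(x)$, i.e. $\sum_{K}(-1)^{|K|-1}$ over all non-empty cliques $K$ of that induced subgraph. *)

theory Defs
  imports Main
begin

definition is_asc :: "'a set set \<Rightarrow> bool" where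
  "is_asc G \<longleftrightarrow> finite G \<and>
     (\<forall>x\<in>G. x \<noteq> {} \<and> finite x) \<and>
     (\<forall>x\<in>G. \<forall>y. y \<noteq> {} \<and> y \<subseteq> x \<longrightarrow> y \<in> G)"

definition omega :: "'a set \<Rightarrow> int" where
  "omega x = (-1) ^ (card x - 1)"

definition chi :: "'a set set \<Rightarrow> int" where
  "chi G = (\<Sum>x\<in>G. omega x)"

text \<open>Adjacency in the Barycentric refinement G1: distinct and comparable.\<close>
definition bary_adj :: "'a set \<Rightarrow> 'a set \<Rightarrow> bool" where
  "bary_adj x y \<longleftrightarrow> x \<noteq> y \<and> (x \<subseteq> y \<or> y \<subseteq> x)"

definition cliques :: "'a set set \<Rightarrow> 'a set set set" where
  "cliques V = {K. K \<subseteq> V \<and> K \<noteq> {} \<and> (\<forall>x\<in>K. \<forall>y\<in>K. x \<noteq> y \<longrightarrow> bary_adj x y)}"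

text \<open>Euler characteristic of the Whitney complex of the induced subgraph on V.\<close>
definition chi_whitney :: "'a set set \<Rightarrow> int" where
  "chi_whitney V = (\<Sum>K\<in>cliques V. (-1) ^ (card K - 1))"

definition unit_sphere :: "'a set set \<Rightarrow> 'a set \<Rightarrow> 'a set set" where
  "unit_sphere G x = {y\<in>G. y \<subset> x \<or> x \<subset> y}"

end

theory Submission
  imports Defs
begin

(* Let h(x) be 1 - chi of the order complex of the simplices strictly containing x. The unit
   sphere S(x) is the join of the boundary of x with these simplices, 1 - chi is multiplicative
   under joins, and the boundary of x is a sphere with 1 - chi = omega(x); hence
   omega(x) (1 - chi(S(x))) = omega(x)^2 h(x) = h(x). Splitting chains by their least element
   shows that h sums to 1 over the simplices containing any given x, while omega sums to 1 over
   the faces of any simplex. Summing omega(x) h(y) over all pairs x <= y in G in both orders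
   gives sum_x h(x) = sum_x omega(x) = chi(G). *)

definition chains_in :: "('b \<Rightarrow> 'b \<Rightarrow> bool) \<Rightarrow> 'b set \<Rightarrow> 'b set set" where
  "chains_in ord V = {K. K \<subseteq> V \<and> Complete_Partial_Order.chain ord K}"

(* Minus the reduced Euler characteristic of the order complex of V: the empty chain counts 1. *)
definition signed_chains :: "('b \<Rightarrow> 'b \<Rightarrow> bool) \<Rightarrow> 'b set \<Rightarrow> int" where
  "signed_chains ord V = (\<Sum>K \<in> chains_in ord V. (-1) ^ card K)"

lemma finite_chains_in: "finite V \<Longrightarrow> finite (chains_in ord V)"
  by (rule finite_subset[of _ "Pow V"]) (auto simp: chains_in_def)

lemma empty_in_chains_in: "{} \<in> chains_in ord V"
  by (simp add: chains_in_def chain_empty)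

lemma chains_in_converse: "chains_in (\<lambda>x y. ord y x) V = chains_in ord V"
  unfolding chains_in_def Complete_Partial_Order.chain_def by blast

lemma signed_chains_remove_empty:
  assumes "finite V"
  shows "signed_chains ord V = 1 + (\<Sum>K \<in> chains_in ord V - {{}}. (-1) ^ card K)"
  using sum.remove[OF finite_chains_in[OF assms] empty_in_chains_in, where g = "\<lambda>K. (-1) ^ card K"]
  by (simp add: signed_chains_def)

lemma chains_in_union:
  assumes below: "\<And>a b. a \<in> A \<Longrightarrow> b \<in> B \<Longrightarrow> ord a b"
  shows "(\<lambda>(P, Q). P \<union> Q) ` (chains_in ord A \<times> chains_in ord B) = chains_in ord (A \<union> B)"
proof (intro equalityI subsetI)
  fix K assume "K \<in> (\<lambda>(P, Q). P \<union> Q) ` (chains_in ord A \<times> chains_in ord B)"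
  then obtain P Q where K: "K = P \<union> Q"
    and P: "P \<subseteq> A" "Complete_Partial_Order.chain ord P"
    and Q: "Q \<subseteq> B" "Complete_Partial_Order.chain ord Q"
    by (auto simp: chains_in_def)
  have "Complete_Partial_Order.chain ord (P \<union> Q)"
  proof (rule chainI)
    fix x y assume "x \<in> P \<union> Q" "y \<in> P \<union> Q"
    then show "ord x y \<or> ord y x"
      using chainD[OF P(2)] chainD[OF Q(2)] below P(1) Q(1) by blast
  qed
  then show "K \<in> chains_in ord (A \<union> B)"
    using K P Q by (auto simp: chains_in_def)
next
  fix K assume "K \<in> chains_in ord (A \<union> B)"
  then have "K = (K \<inter> A) \<union> (K \<inter> B)" "(K \<inter> A, K \<inter> B) \<in> chains_in ord A \<times> chains_in ord B"
    by (auto simp: chains_in_def intro: chain_subset)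
  then show "K \<in> (\<lambda>(P, Q). P \<union> Q) ` (chains_in ord A \<times> chains_in ord B)"
    by blast
qed

lemma signed_chains_join:
  assumes fin: "finite A" "finite B" and disj: "A \<inter> B = {}"
    and below: "\<And>a b. a \<in> A \<Longrightarrow> b \<in> B \<Longrightarrow> ord a b"
  shows "signed_chains ord (A \<union> B) = signed_chains ord A * signed_chains ord B"
proof -
  have inj: "inj_on (\<lambda>(P, Q). P \<union> Q) (chains_in ord A \<times> chains_in ord B)"
  proof (rule inj_onI, clarify)
    fix P Q P' Q'
    assume "P \<in> chains_in ord A" "Q \<in> chains_in ord B" "P' \<in> chains_in ord A" "Q' \<in> chains_in ord B"
      and "P \<union> Q = P' \<union> Q'"
    then show "P = P' \<and> Q = Q'"
      using disj unfolding chains_in_def by blast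
  qed
  have "signed_chains ord (A \<union> B)
      = (\<Sum>K \<in> (\<lambda>(P, Q). P \<union> Q) ` (chains_in ord A \<times> chains_in ord B). (-1) ^ card K)"
    by (simp only: signed_chains_def chains_in_union[OF below])
  also have "\<dots> = (\<Sum>(P, Q) \<in> chains_in ord A \<times> chains_in ord B. (-1) ^ card (P \<union> Q))"
    unfolding sum.reindex[OF inj] by (simp add: case_prod_unfold)
  also have "\<dots> = (\<Sum>(P, Q) \<in> chains_in ord A \<times> chains_in ord B. (-1) ^ card P * (-1) ^ card Q)"
  proof (intro sum.cong refl, clarify)
    fix P Q assume "P \<in> chains_in ord A" "Q \<in> chains_in ord B"
    then have "card (P \<union> Q) = card P + card Q"
      using fin disj by (intro card_Un_disjoint) (auto simp: chains_in_def intro: finite_subset)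
    then show "(-1::int) ^ card (P \<union> Q) = (-1) ^ card P * (-1) ^ card Q"
      by (simp add: power_add)
  qed
  also have "\<dots> = signed_chains ord A * signed_chains ord B"
    by (simp add: signed_chains_def sum_product sum.cartesian_product case_prod_unfold)
  finally show ?thesis .
qed

context ordering
begin

lemma finite_chain_has_greatest:
  assumes "finite K" "K \<noteq> {}" "Complete_Partial_Order.chain (\<^bold>\<le>) K"
  obtains m where "m \<in> K" "\<And>y. y \<in> K \<Longrightarrow> y \<^bold>\<le> m"
  using assms
proof (induction K arbitrary: thesis rule: finite_ne_induct)
  case (singleton x)
  then show ?case
    using refl by blast
next
  case (insert a F)
  obtain m where m: "m \<in> F" "\<And>y. y \<in> F \<Longrightarrow> y \<^bold>\<le> m"
    using insert.IH insert.prems(2) chain_subset by blast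
  from insert.prems(2) m(1) consider "a \<^bold>\<le> m" | "m \<^bold>\<le> a"
    by (auto elim: chainE)
  then show ?case
  proof cases
    case 1
    then show ?thesis
      using insert.prems(1)[of m] m by blast
  next
    case 2
    have "y \<^bold>\<le> a" if "y \<in> insert a F" for y
      using that refl trans[OF m(2) 2] by blast
    then show ?thesis
      using insert.prems(1) by blast
  qed
qed

lemma inj_on_insert_greatest:
  "inj_on (\<lambda>(m, C). insert m C) (SIGMA m:V. chains_in (\<^bold>\<le>) {y \<in> V. y \<^bold>< m})"
proof (rule inj_onI, clarify)
  fix m C m' C'
  assume "C \<in> chains_in (\<^bold>\<le>) {y \<in> V. y \<^bold>< m}" "C' \<in> chains_in (\<^bold>\<le>) {y \<in> V. y \<^bold>< m'}"
  then have C: "\<And>y. y \<in> C \<Longrightarrow> y \<^bold>< m" and C': "\<And>y. y \<in> C' \<Longrightarrow> y \<^bold>< m'"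
    unfolding chains_in_def by blast+
  assume eq: "insert m C = insert m' C'"
  have "m = m'"
  proof (rule ccontr)
    assume "m \<noteq> m'"
    then have "m \<in> C'" "m' \<in> C"
      using eq by (metis insertE insertI1)+
    then show False
      by (blast intro: asym C C')
  qed
  moreover have "m \<notin> C" "m' \<notin> C'"
    using C C' irrefl by blast+
  ultimately show "m = m' \<and> C = C'"
    using eq by (simp add: insert_ident)
qed

lemma chains_in_insert_greatest:
  assumes "finite V"
  shows "(\<lambda>(m, C). insert m C) ` (SIGMA m:V. chains_in (\<^bold>\<le>) {y \<in> V. y \<^bold>< m})
    = chains_in (\<^bold>\<le>) V - {{}}"
proof (intro equalityI subsetI)
  fix K assume "K \<in> (\<lambda>(m, C). insert m C) ` (SIGMA m:V. chains_in (\<^bold>\<le>) {y \<in> V. y \<^bold>< m})"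
  then obtain m C where K: "K = insert m C" and m: "m \<in> V"
    and C: "C \<subseteq> {y \<in> V. y \<^bold>< m}" "Complete_Partial_Order.chain (\<^bold>\<le>) C"
    by (auto simp: chains_in_def)
  have "Complete_Partial_Order.chain (\<^bold>\<le>) (insert m C)"
  proof (rule chainI)
    fix x y assume "x \<in> insert m C" "y \<in> insert m C"
    then show "x \<^bold>\<le> y \<or> y \<^bold>\<le> x"
      using chainD[OF C(2)] C(1) by (auto intro: refl strict_implies_order)
  qed
  then show "K \<in> chains_in (\<^bold>\<le>) V - {{}}"
    using K m C by (auto simp: chains_in_def)
next
  fix K assume K: "K \<in> chains_in (\<^bold>\<le>) V - {{}}"
  then have "finite K" "K \<noteq> {}" "Complete_Partial_Order.chain (\<^bold>\<le>) K"
    using assms finite_subset by (auto simp: chains_in_def)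
  then obtain m where m: "m \<in> K" "\<And>y. y \<in> K \<Longrightarrow> y \<^bold>\<le> m"
    by (rule finite_chain_has_greatest) (rule that)
  have "K - {m} \<subseteq> {y \<in> V. y \<^bold>< m}"
  proof
    fix y assume "y \<in> K - {m}"
    then have "y \<in> V" "y \<noteq> m" "y \<^bold>\<le> m"
      using K m(2) unfolding chains_in_def by blast+
    then show "y \<in> {y \<in> V. y \<^bold>< m}"
      by (simp add: not_eq_order_implies_strict)
  qed
  then have "(m, K - {m}) \<in> (SIGMA m:V. chains_in (\<^bold>\<le>) {y \<in> V. y \<^bold>< m})"
    using K m(1) by (auto simp: chains_in_def intro: chain_subset)
  then show "K \<in> (\<lambda>(m, C). insert m C) ` (SIGMA m:V. chains_in (\<^bold>\<le>) {y \<in> V. y \<^bold>< m})"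
    using m(1) by (intro image_eqI[of _ _ "(m, K - {m})"]) auto
qed

lemma signed_chains_split_greatest:
  assumes "finite V"
  shows "signed_chains (\<^bold>\<le>) V = 1 - (\<Sum>m\<in>V. signed_chains (\<^bold>\<le>) {y \<in> V. y \<^bold>< m})"
proof -
  let ?below = "\<lambda>m. chains_in (\<^bold>\<le>) {y \<in> V. y \<^bold>< m}"
  have "signed_chains (\<^bold>\<le>) V = 1 + (\<Sum>K \<in> chains_in (\<^bold>\<le>) V - {{}}. (-1) ^ card K)"
    by (rule signed_chains_remove_empty[OF assms])
  also have "(\<Sum>K \<in> chains_in (\<^bold>\<le>) V - {{}}. (-1::int) ^ card K)
      = (\<Sum>(m, C) \<in> (SIGMA m:V. ?below m). (-1) ^ card (insert m C))"
    unfolding chains_in_insert_greatest[OF assms, symmetric] sum.reindex[OF inj_on_insert_greatest]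
    by (simp add: case_prod_unfold)
  also have "\<dots> = (\<Sum>m\<in>V. \<Sum>C \<in> ?below m. (-1) ^ card (insert m C))"
    using assms by (simp add: sum.Sigma finite_chains_in)
  also have "\<dots> = (\<Sum>m\<in>V. \<Sum>C \<in> ?below m. - ((-1) ^ card C))"
  proof (intro sum.cong HOL.refl)
    fix m C assume C: "C \<in> ?below m"
    then have "m \<notin> C"
      using irrefl by (auto simp: chains_in_def)
    moreover have "finite C"
      using C assms finite_subset[of C V] by (auto simp: chains_in_def)
    ultimately show "(-1::int) ^ card (insert m C) = - ((-1) ^ card C)"
      by simp
  qed
  finally show ?thesis
    by (simp add: signed_chains_def sum_negf)
qed

lemma sum_signed_chains_above:
  assumes "finite V" "x \<in> V"
  shows "(\<Sum>m | m \<in> V \<and> x \<^bold>\<le> m. signed_chains (\<^bold>\<le>) {y \<in> V. m \<^bold>< y}) = 1"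
proof -
  \<comment> \<open>chains above x are split by their least element, their greatest one in the dual order\<close>
  interpret dual: ordering "\<lambda>a b. b \<^bold>\<le> a" "\<lambda>a b. b \<^bold>< a"
    by (rule ordering_dualI) (rule ordering_axioms)
  let ?above = "\<lambda>m. {y \<in> V. m \<^bold>< y}"
  have "signed_chains (\<^bold>\<le>) (?above x)
      = 1 - (\<Sum>m \<in> ?above x. signed_chains (\<^bold>\<le>) {y \<in> ?above x. m \<^bold>< y})"
    using dual.signed_chains_split_greatest[of "?above x"] assms(1)
    by (simp add: signed_chains_def chains_in_converse[of "(\<^bold>\<le>)"])
  also have "(\<Sum>m \<in> ?above x. signed_chains (\<^bold>\<le>) {y \<in> ?above x. m \<^bold>< y})
      = (\<Sum>m \<in> ?above x. signed_chains (\<^bold>\<le>) (?above m))"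
  proof (intro sum.cong HOL.refl arg_cong[where f = "signed_chains (\<^bold>\<le>)"])
    fix m assume "m \<in> ?above x"
    then have "x \<^bold>< m"
      by simp
    then show "{y \<in> ?above x. m \<^bold>< y} = ?above m"
      using strict_trans[OF \<open>x \<^bold>< m\<close>] by blast
  qed
  finally have "signed_chains (\<^bold>\<le>) (?above x) + (\<Sum>m \<in> ?above x. signed_chains (\<^bold>\<le>) (?above m)) = 1"
    by simp
  moreover have "{m \<in> V. x \<^bold>\<le> m} = insert x (?above x)"
    using assms(2) order_iff_strict by blast
  moreover have "x \<notin> ?above x"
    using irrefl by blast
  ultimately show ?thesis
    using assms(1) by simp
qed

end

lemma omega_eq_neg_power: "finite x \<Longrightarrow> x \<noteq> {} \<Longrightarrow> omega x = - ((-1) ^ card x)"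
  by (cases "card x") (auto simp: omega_def)

lemma omega_squared: "omega x * omega x = 1"
  by (simp add: omega_def flip: power_mult_distrib)

lemma sum_omega_nonempty_subsets:
  assumes "finite x" "x \<noteq> {}"
  shows "(\<Sum>y \<in> Pow x - {{}}. omega y) = 1"
proof -
  have "card {y. y \<in> Pow x \<and> even (card y)} = card {y. y \<in> Pow x \<and> odd (card y)}"
    using card_subsupersets_even_odd[of x "{}"] assms by auto
  then have "(\<Sum>y \<in> Pow x. (-1::int) ^ card y) = 0"
    using assms(1) by (intro sum_alternating_cancels) auto
  moreover have "(\<Sum>y \<in> Pow x - {{}}. omega y) = - (\<Sum>y \<in> Pow x - {{}}. (-1) ^ card y)"
    unfolding sum_negf[symmetric]
    using assms(1) by (intro sum.cong refl omega_eq_neg_power) (auto dest: finite_subset)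
  ultimately show ?thesis
    using assms(1) sum.remove[of "Pow x" "{}" "\<lambda>y. (-1::int) ^ card y"] by simp
qed

lemma one_minus_chi_whitney:
  assumes "finite V"
  shows "1 - chi_whitney V = signed_chains (\<subseteq>) V"
proof -
  let ?ch = "chains_in (\<subseteq>) V"
  have cliques: "cliques V = ?ch - {{}}"
    by (auto simp: cliques_def bary_adj_def chains_in_def Complete_Partial_Order.chain_def)
  have "chi_whitney V = (\<Sum>K \<in> ?ch - {{}}. omega K)"
    by (simp add: chi_whitney_def cliques omega_def)
  also have "\<dots> = - (\<Sum>K \<in> ?ch - {{}}. (-1) ^ card K)"
    unfolding sum_negf[symmetric]
    using assms by (intro sum.cong refl omega_eq_neg_power) (auto simp: chains_in_def dest: finite_subset)
  also have "(\<Sum>K \<in> ?ch - {{}}. (-1::int) ^ card K) = signed_chains (\<subseteq>) V - 1"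
    using signed_chains_remove_empty[OF assms, of "(\<subseteq>)"] by simp
  finally show ?thesis
    by simp
qed

lemma signed_chains_simplex_boundary:
  assumes "finite x" "x \<noteq> {}"
  shows "signed_chains (\<subseteq>) (Pow x - {{}, x}) = omega x"
  using assms
proof (induction x rule: finite_psubset_induct)
  case (psubset x)
  let ?B = "Pow x - {{}, x}"
  have "signed_chains (\<subseteq>) ?B = 1 - (\<Sum>m \<in> ?B. signed_chains (\<subseteq>) {y \<in> ?B. y \<subset> m})"
    using psubset.hyps by (intro order.signed_chains_split_greatest) simp
  also have "(\<Sum>m \<in> ?B. signed_chains (\<subseteq>) {y \<in> ?B. y \<subset> m}) = (\<Sum>m \<in> ?B. omega m)"
  proof (intro sum.cong refl)
    fix m assume m: "m \<in> ?B"
    then have "{y \<in> ?B. y \<subset> m} = Pow m - {{}, m}"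
      by auto
    then show "signed_chains (\<subseteq>) {y \<in> ?B. y \<subset> m} = omega m"
      using m psubset.IH psubset.hyps by (auto dest: finite_subset)
  qed
  also have "(\<Sum>m \<in> ?B. omega m) = 1 - omega x"
  proof -
    have "Pow x - {{}} - {x} = ?B"
      by blast
    then show ?thesis
      using sum.remove[of "Pow x - {{}}" x omega] psubset.hyps psubset.prems
        sum_omega_nonempty_subsets[OF psubset.hyps psubset.prems]
      by simp
  qed
  finally show ?case
    by simp
qed

lemma asc_faces_below:
  assumes "is_asc G" "x \<in> G"
  shows "{y \<in> G. y \<subseteq> x} = Pow x - {{}}"
  using assms unfolding is_asc_def by blast

lemma signed_chains_unit_sphere:
  assumes "is_asc G" "x \<in> G"
  shows "signed_chains (\<subseteq>) (unit_sphere G x) = omega x * signed_chains (\<subseteq>) {y \<in> G. x \<subset> y}"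
proof -
  have G: "finite G" "finite x" "x \<noteq> {}"
    using assms by (auto simp: is_asc_def)
  have "unit_sphere G x = (Pow x - {{}, x}) \<union> {y \<in> G. x \<subset> y}"
    using asc_faces_below[OF assms] by (auto simp: unit_sphere_def)
  also have "signed_chains (\<subseteq>) \<dots> = signed_chains (\<subseteq>) (Pow x - {{}, x}) * signed_chains (\<subseteq>) {y \<in> G. x \<subset> y}"
    using G by (intro signed_chains_join) auto
  finally show ?thesis
    using signed_chains_simplex_boundary[OF G(2,3)] by simp
qed

lemma sum_signed_chains_above_eq_chi:
  assumes "is_asc G"
  shows "(\<Sum>m \<in> G. signed_chains (\<subseteq>) {y \<in> G. m \<subset> y}) = chi G"
proof -
  let ?h = "\<lambda>m. signed_chains (\<subseteq>) {y \<in> G. m \<subset> y}"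
  have fin: "finite G"
    using assms by (simp add: is_asc_def)
  have "(\<Sum>m \<in> G. ?h m) = (\<Sum>m \<in> G. \<Sum>x | x \<in> G \<and> x \<subseteq> m. omega x * ?h m)"
  proof (intro sum.cong refl)
    fix m assume m: "m \<in> G"
    then have "finite m" "m \<noteq> {}"
      using assms by (auto simp: is_asc_def)
    then have "(\<Sum>x | x \<in> G \<and> x \<subseteq> m. omega x) = 1"
      using asc_faces_below[OF assms m] sum_omega_nonempty_subsets by simp
    then show "?h m = (\<Sum>x | x \<in> G \<and> x \<subseteq> m. omega x * ?h m)"
      by (simp flip: sum_distrib_right)
  qed
  also have "\<dots> = (\<Sum>x \<in> G. \<Sum>m | m \<in> G \<and> x \<subseteq> m. omega x * ?h m)"
    by (rule sum.swap_restrict[OF fin fin])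
  also have "\<dots> = (\<Sum>x \<in> G. omega x)"
  proof (intro sum.cong refl)
    fix x assume "x \<in> G"
    then have "(\<Sum>m | m \<in> G \<and> x \<subseteq> m. ?h m) = 1"
      using fin by (rule order.sum_signed_chains_above[rotated])
    then show "(\<Sum>m | m \<in> G \<and> x \<subseteq> m. omega x * ?h m) = omega x"
      by (simp flip: sum_distrib_left)
  qed
  finally show ?thesis
    by (simp add: chi_def)
qed

theorem mainTheorem8:
  fixes G :: "'a set set"
  assumes "is_asc G"
  shows "(\<Sum>x\<in>G. omega x * (1 - chi_whitney (unit_sphere G x))) = chi G"
proof -
  have "omega x * (1 - chi_whitney (unit_sphere G x)) = signed_chains (\<subseteq>) {y \<in> G. x \<subset> y}"
    if "x \<in> G" for x
  proof -
    have "finite (unit_sphere G x)"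
      using assms by (simp add: is_asc_def unit_sphere_def)
    then have "1 - chi_whitney (unit_sphere G x) = omega x * signed_chains (\<subseteq>) {y \<in> G. x \<subset> y}"
      using signed_chains_unit_sphere[OF assms that] by (simp add: one_minus_chi_whitney)
    then show ?thesis
      by (simp add: omega_squared flip: mult.assoc)
  qed
  then show ?thesis
    using sum_signed_chains_above_eq_chi[OF assms] by simp
qed

end
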